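(* Let $X$ be a real Banach space with $\operatorname{dens} X \geq \omega_2$. Suppose that $X$ has a fundamental biorthogonal system. Then $X$ does not contain overcomplete subsets.
   Context: A biorthogonal system in $X$ is a family $\{x_\alpha; f_\alpha\}_{\alpha\in\Gamma} \subseteq X \times X^*$ with $\langle f_\alpha, x_\beta\rangle = \delta_{\alpha,\beta}$ for all $\alpha,\beta\in\Gamma$; it is fundamental if $\overline{\operatorname{span}}\{x_\alpha\}_{\alpha\in\Gamma} = X$. $\operatorname{dens}$ denotes the density character. A subset $S$ of a Banach space $X$ with $|S| = \operatorname{dens} X$ is called overcomplete if every subset $\Lambda \subseteq S$ with $|\Lambda| = |S|$ is linearly dense in $X$. *)

theory Defs
  imports "HOL-Analysis.Analysis"
begin

text \<open>Cardinal comparisons use the ordinal-relation machinery of HOL/BNF_Cardinal_Order_Relation: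
  card_of A is the cardinal of A, ordLeq / ordIso are cardinal \<open>\<le>\<close> / \<open>=\<close>,
  natLeq is omega, and cardSuc is the cardinal successor.\<close>

definition aleph2 :: "nat set set rel" where
  "aleph2 = cardSuc (cardSuc natLeq)"

definition dens_ge_omega2 :: "'a::real_normed_vector itself \<Rightarrow> bool" where
  "dens_ge_omega2 _ \<longleftrightarrow> (\<forall>D::'a set. closure D = UNIV \<longrightarrow> ordLeq3 aleph2 (card_of D))"

definition card_eq_dens :: "'a::real_normed_vector set \<Rightarrow> bool" where
  "card_eq_dens S \<longleftrightarrow>
     (\<exists>D::'a set. closure D = UNIV \<and> ordIso2 (card_of D) (card_of S)) \<and>
     (\<forall>D::'a set. closure D = UNIV \<longrightarrow> ordLeq3 (card_of S) (card_of D))"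

definition biorthogonal_system ::
    "'i set \<Rightarrow> ('i \<Rightarrow> 'a::real_normed_vector) \<Rightarrow> ('i \<Rightarrow> 'a \<Rightarrow> real) \<Rightarrow> bool" where
  "biorthogonal_system \<Gamma> x f \<longleftrightarrow>
     (\<forall>\<alpha>\<in>\<Gamma>. bounded_linear (f \<alpha>)) \<and>
     (\<forall>\<alpha>\<in>\<Gamma>. \<forall>\<beta>\<in>\<Gamma>. f \<alpha> (x \<beta>) = (if \<alpha> = \<beta> then 1 else 0))"

definition fundamental_biorthogonal_system ::
    "'i set \<Rightarrow> ('i \<Rightarrow> 'a::real_normed_vector) \<Rightarrow> ('i \<Rightarrow> 'a \<Rightarrow> real) \<Rightarrow> bool" where
  "fundamental_biorthogonal_system \<Gamma> x f \<longleftrightarrow>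
     biorthogonal_system \<Gamma> x f \<and> closure (span (x ` \<Gamma>)) = UNIV"

definition overcomplete :: "'a::real_normed_vector set \<Rightarrow> bool" where
  "overcomplete S \<longleftrightarrow> card_eq_dens S \<and>
     (\<forall>\<Lambda>\<subseteq>S. ordIso2 (card_of \<Lambda>) (card_of S) \<longrightarrow> closure (span \<Lambda>) = UNIV)"

end

(* Every vector of X has countable support with respect to a fundamental biorthogonal system,
   and an overcomplete set S meets every kernel ker f_alpha in fewer than |S| points.  Since X
   has no dense subset of size omega_1, there are more than omega_1 indices; well-ordering S and
   bounding each S \<inter> ker f_alpha by an initial segment of S, one finds omega_1 indices whose
   kernels together still miss some s \<in> S.  Then f_alpha s \<noteq> 0 for uncountably many alpha. *)
theory Submission
  imports Defs "HOL-Library.Countable_Set_Type"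
begin

unbundle cardinal_syntax
no_notation elt_set_eq (infix \<open>=o\<close> 50)

section \<open>Cardinals\<close>

lemma countable_card_of_ordLeq_infinite_Field:
  assumes "countable A" "infinite (Field r)" "Card_order r"
  shows "|A| \<le>o r"
proof -
  have "|A| \<le>o natLeq" using assms(1) countable_card_le_natLeq by blast
  also have "natLeq \<le>o |Field r|" using assms(2) infinite_iff_natLeq_ordLeq by blast
  also have "|Field r| =o r" using assms(3) card_of_Field_ordIso by blast
  finally show ?thesis .
qed

lemma card_of_UNION_ordLeq_infinite_Field:
  assumes "infinite (Field r)" "Card_order r" "|I| \<le>o r" "\<And>i. i \<in> I \<Longrightarrow> |A i| \<le>o r"
  shows "|\<Union>i\<in>I. A i| \<le>o r"
proof -
  have Field: "|Field r| =o r" using assms(2) card_of_Field_ordIso by blast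
  have to_Field: "X \<le>o |Field r|" if "X \<le>o r" for X
    using that Field ordIso_symmetric ordLeq_ordIso_trans by blast
  have "|\<Union>i\<in>I. A i| \<le>o |Field r|"
    by (rule card_of_UNION_ordLeq_infinite) (use assms(1,3,4) to_Field in auto)
  then show ?thesis using Field ordLeq_ordIso_trans by blast
qed

lemma card_of_le_underS_if_ordLess:
  assumes "Well_order r" "|B| <o r"
  shows "\<exists>a\<in>Field r. |B| \<le>o |underS r a|"
proof -
  obtain a where a: "a \<in> Field r" and iso: "|B| =o Restr r (underS r a)"
    using assms ordLess_iff_ordIso_Restr card_of_Well_order by blast
  have "|Field |B|| \<le>o |Field (Restr r (underS r a))|"
    using iso by (simp add: card_of_mono2 ordIso_iff_ordLeq)
  also have "|Field (Restr r (underS r a))| \<le>o |underS r a|"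
    by (rule card_of_mono1[OF Field_Restr_subset])
  finally show ?thesis using a by (auto simp: Field_card_of)
qed

lemma Card_order_cardSuc_natLeq: "Card_order (cardSuc natLeq)"
  by (rule cardSuc_Card_order[OF natLeq_Card_order])

lemma infinite_Field_cardSuc_natLeq: "infinite (Field (cardSuc natLeq))"
  using Cinfinite_cardSuc[OF natLeq_Cinfinite] by (simp add: cinfinite_def)

lemma uncountable_iff_cardSuc_natLeq_ordLeq: "uncountable A \<longleftrightarrow> cardSuc natLeq \<le>o |A|"
proof -
  have "uncountable A \<longleftrightarrow> natLeq <o |A|"
    using countable_card_le_natLeq not_ordLeq_iff_ordLess[OF natLeq_Well_order card_of_Well_order]
    by blast
  also have "\<dots> \<longleftrightarrow> cardSuc natLeq \<le>o |A|"
    by (rule cardSuc_ordLess_ordLeq[OF natLeq_Card_order card_of_Card_order])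
  finally show ?thesis .
qed

lemma uncountable_imp_subset_card_cardSuc_natLeq:
  assumes "uncountable A"
  shows "\<exists>B. B \<subseteq> A \<and> |B| =o cardSuc natLeq"
proof -
  have Field: "|Field (cardSuc natLeq)| =o cardSuc natLeq"
    by (rule card_of_Field_ordIso[OF Card_order_cardSuc_natLeq])
  have "cardSuc natLeq \<le>o |A|"
    using assms uncountable_iff_cardSuc_natLeq_ordLeq by blast
  then have "|Field (cardSuc natLeq)| \<le>o |A|"
    by (rule ordIso_ordLeq_trans[OF Field])
  then obtain B where B: "B \<subseteq> A" "|Field (cardSuc natLeq)| =o |B|"
    using internalize_card_of_ordLeq2[THEN iffD1] by blast
  then show ?thesis using ordIso_transitive[OF ordIso_symmetric[OF B(2)] Field] by blast
qed

lemma card_of_Field_ordLeq_cardSuc_natLeq: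
  assumes V: "Well_order V" and countable: "\<And>a. a \<in> Field V \<Longrightarrow> countable (underS V a)"
  shows "|Field V| \<le>o cardSuc natLeq"
proof -
  have "V \<le>o cardSuc natLeq"
  proof (rule ccontr)
    assume "\<not> V \<le>o cardSuc natLeq"
    then have "cardSuc natLeq <o V"
      using V Card_order_cardSuc_natLeq card_order_on_well_order_on not_ordLeq_iff_ordLess by blast
    then obtain a where a: "a \<in> Field V" and iso: "cardSuc natLeq =o Restr V (underS V a)"
      using V Card_order_cardSuc_natLeq card_order_on_well_order_on ordLess_iff_ordIso_Restr
      by blast
    have "cardSuc natLeq \<le>o |Field (cardSuc natLeq)|"
      using card_of_Field_ordIso[OF Card_order_cardSuc_natLeq] ordIso_iff_ordLeq by blast
    also have "|Field (cardSuc natLeq)| \<le>o |Field (Restr V (underS V a))|"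
      using iso by (simp add: card_of_mono2 ordIso_iff_ordLeq)
    also have "|Field (Restr V (underS V a))| \<le>o |underS V a|"
      by (rule card_of_mono1[OF Field_Restr_subset])
    finally show False using countable[OF a] uncountable_iff_cardSuc_natLeq_ordLeq by blast
  qed
  then show ?thesis using V card_of_least ordLeq_transitive by blast
qed

lemma card_of_ordLeq_cardSuc_natLeq_if_countable_initial_preimages:
  assumes W: "Well_order W" and \<rho>: "\<rho> ` A \<subseteq> Field W"
    and countable: "\<And>b. b \<in> Field W \<Longrightarrow> countable {\<alpha>\<in>A. (\<rho> \<alpha>, b) \<in> W}"
  shows "|A| \<le>o cardSuc natLeq"
proof -
  define V where "V = Restr W (\<rho> ` A)"
  have refl: "(b, b) \<in> W" if "b \<in> Field W" for b
    using W that unfolding order_on_defs refl_on_def by blast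
  have Field_V: "Field V = \<rho> ` A"
    unfolding V_def using W \<rho> by (simp add: Refl_Field_Restr2 order_on_defs)
  have "countable (underS V a)" if "a \<in> Field V" for a
  proof (rule countable_subset)
    show "underS V a \<subseteq> \<rho> ` {\<alpha>\<in>A. (\<rho> \<alpha>, a) \<in> W}"
      unfolding V_def underS_def by blast
    show "countable (\<rho> ` {\<alpha>\<in>A. (\<rho> \<alpha>, a) \<in> W})"
      using that Field_V \<rho> countable by blast
  qed
  moreover have "Well_order V" unfolding V_def using W by (rule Well_order_Restr)
  ultimately have "|\<rho> ` A| \<le>o cardSuc natLeq"
    using card_of_Field_ordLeq_cardSuc_natLeq Field_V by metis
  moreover have "|{\<alpha>\<in>A. (\<rho> \<alpha>, b) \<in> W}| \<le>o cardSuc natLeq" if "b \<in> \<rho> ` A" for b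
    using that \<rho> countable countable_card_of_ordLeq_infinite_Field
      infinite_Field_cardSuc_natLeq Card_order_cardSuc_natLeq by blast
  ultimately have "|\<Union>b\<in>\<rho> ` A. {\<alpha>\<in>A. (\<rho> \<alpha>, b) \<in> W}| \<le>o cardSuc natLeq"
    by (rule card_of_UNION_ordLeq_infinite_Field[OF infinite_Field_cardSuc_natLeq
        Card_order_cardSuc_natLeq])
  moreover have "A = (\<Union>b\<in>\<rho> ` A. {\<alpha>\<in>A. (\<rho> \<alpha>, b) \<in> W})"
    using refl \<rho> by blast
  ultimately show ?thesis by (metis (no_types))
qed

lemma exists_uncountable_subfamily_small_Union:
  assumes I: "cardSuc natLeq <o |I|" and S: "cardSuc natLeq <o |S|"
    and B: "\<And>i. i \<in> I \<Longrightarrow> |B i| <o |S|"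
  shows "\<exists>J. J \<subseteq> I \<and> uncountable J \<and> |\<Union>i\<in>J. B i| <o |S|"
proof -
  define W where "W = |S|"
  have W: "Well_order W" "Card_order W" "Field W = S"
    unfolding W_def by (rule card_of_Well_order, rule card_of_Card_order, rule Field_card_of)
  have "\<exists>a\<in>S. |B i| \<le>o |underS W a|" if "i \<in> I" for i
    using card_of_le_underS_if_ordLess[OF W(1)] B[OF that] W(3) unfolding W_def by blast
  then obtain \<rho> where \<rho>: "\<And>i. i \<in> I \<Longrightarrow> \<rho> i \<in> S"
    and B_\<rho>: "\<And>i. i \<in> I \<Longrightarrow> |B i| \<le>o |underS W (\<rho> i)|"
    by metis
  have "\<not> (\<forall>b\<in>S. countable {i\<in>I. (\<rho> i, b) \<in> W})"
  proof
    assume countable: "\<forall>b\<in>S. countable {i\<in>I. (\<rho> i, b) \<in> W}"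
    have "\<rho> ` I \<subseteq> Field W" using \<rho> W(3) by auto
    then have "|I| \<le>o cardSuc natLeq"
      by (rule card_of_ordLeq_cardSuc_natLeq_if_countable_initial_preimages[OF W(1)])
        (use countable W(3) in auto)
    then show False using I not_ordLess_ordLeq by blast
  qed
  then obtain b where b: "b \<in> S" and "uncountable {i\<in>I. (\<rho> i, b) \<in> W}"
    by blast
  then obtain J where J: "J \<subseteq> {i\<in>I. (\<rho> i, b) \<in> W}" and J_card: "|J| =o cardSuc natLeq"
    using uncountable_imp_subset_card_cardSuc_natLeq by blast
  have uncountable_J: "uncountable J"
    using ordIso_imp_ordLeq[OF ordIso_symmetric[OF J_card]] uncountable_iff_cardSuc_natLeq_ordLeq
    by blast
  have "|B i| \<le>o |J <+> underS W b|" if "i \<in> J" for i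
  proof -
    have "i \<in> I" "(\<rho> i, b) \<in> W" using J that by auto
    then have "underS W (\<rho> i) \<subseteq> underS W b"
      using W(1) by (intro underS_incr) (auto simp: order_on_defs)
    then have "|underS W (\<rho> i)| \<le>o |J <+> underS W b|"
      by (rule ordLeq_transitive[OF card_of_mono1 card_of_Plus2])
    then show ?thesis by (rule ordLeq_transitive[OF B_\<rho>[OF \<open>i \<in> I\<close>]])
  qed
  then have "|\<Union>i\<in>J. B i| \<le>o |J <+> underS W b|"
    using uncountable_J countable_finite by (intro card_of_UNION_ordLeq_infinite card_of_Plus1) auto
  also have "|J <+> underS W b| <o |S|"
  proof (rule card_of_Plus_ordLess_infinite)
    have "natLeq <o |S|" by (rule ordLess_transitive[OF cardSuc_greater[OF natLeq_Card_order] S])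
    then show "infinite S" using infinite_iff_natLeq_ordLeq ordLess_imp_ordLeq by blast
    show "|J| <o |S|" by (rule ordIso_ordLess_trans[OF J_card S])
    show "|underS W b| <o |S|"
      using b card_of_underS[OF W(2)] W(3) W_def by simp
  qed
  finally show ?thesis using J uncountable_J by blast
qed

section \<open>Biorthogonal systems\<close>

lemma biorthogonal_system_finite_support:
  assumes bio: "biorthogonal_system \<Gamma> x f" and y: "y \<in> span (x ` \<Gamma>)"
  shows "finite {\<alpha>\<in>\<Gamma>. f \<alpha> y \<noteq> 0}"
  using y
proof (induction rule: span_induct_alt)
  case base
  have "f \<alpha> 0 = 0" if "\<alpha> \<in> \<Gamma>" for \<alpha>
    using bio that unfolding biorthogonal_system_def by (simp add: linear_simps)
  then have "{\<alpha>\<in>\<Gamma>. f \<alpha> 0 \<noteq> 0} = {}" by blast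
  then show ?case by (metis finite.emptyI)
next
  case (step c v y)
  then obtain \<beta> where \<beta>: "\<beta> \<in> \<Gamma>" "v = x \<beta>" by blast
  have "f \<alpha> (c *\<^sub>R v + y) = c * f \<alpha> v + f \<alpha> y" if "\<alpha> \<in> \<Gamma>" for \<alpha>
    using bio that unfolding biorthogonal_system_def by (simp add: linear_simps)
  moreover have "f \<alpha> v = 0" if "\<alpha> \<in> \<Gamma>" "\<alpha> \<noteq> \<beta>" for \<alpha>
    using bio \<beta> that unfolding biorthogonal_system_def by simp
  ultimately have "{\<alpha>\<in>\<Gamma>. f \<alpha> (c *\<^sub>R v + y) \<noteq> 0} \<subseteq> insert \<beta> {\<alpha>\<in>\<Gamma>. f \<alpha> y \<noteq> 0}"
    by auto
  then show ?case using step.IH finite_subset by blast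
qed

lemma fundamental_biorthogonal_system_countable_support:
  assumes "fundamental_biorthogonal_system \<Gamma> x f"
  shows "countable {\<alpha>\<in>\<Gamma>. f \<alpha> s \<noteq> 0}"
proof -
  have bio: "biorthogonal_system \<Gamma> x f" and "s \<in> closure (span (x ` \<Gamma>))"
    using assms unfolding fundamental_biorthogonal_system_def by auto
  then obtain y where y: "\<And>n. y n \<in> span (x ` \<Gamma>)" and lim: "y \<longlonglongrightarrow> s"
    unfolding closure_sequential by blast
  have "{\<alpha>\<in>\<Gamma>. f \<alpha> s \<noteq> 0} \<subseteq> (\<Union>n. {\<alpha>\<in>\<Gamma>. f \<alpha> (y n) \<noteq> 0})"
  proof clarify
    fix \<alpha> assume \<alpha>: "\<alpha> \<in> \<Gamma>" "f \<alpha> s \<noteq> 0"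
    have "bounded_linear (f \<alpha>)" using bio \<alpha>(1) unfolding biorthogonal_system_def by blast
    then have "(\<lambda>n. f \<alpha> (y n)) \<longlonglongrightarrow> f \<alpha> s" using lim by (rule bounded_linear.tendsto)
    then have "\<exists>n. f \<alpha> (y n) \<noteq> 0"
      using \<alpha>(2) LIMSEQ_unique[OF _ tendsto_const] by force
    then show "\<alpha> \<in> (\<Union>n. {\<alpha>\<in>\<Gamma>. f \<alpha> (y n) \<noteq> 0})" using \<alpha>(1) by blast
  qed
  moreover have "countable (\<Union>n. {\<alpha>\<in>\<Gamma>. f \<alpha> (y n) \<noteq> 0})"
    using biorthogonal_system_finite_support[OF bio y] by (simp add: countable_finite)
  ultimately show ?thesis by (rule countable_subset)
qed

lemma closure_span_ne_UNIV_if_subset_kernel: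
  fixes g :: "'a::real_normed_vector \<Rightarrow> 'b::real_normed_vector"
  assumes g: "bounded_linear g" and v: "g v \<noteq> 0" and \<Lambda>: "\<Lambda> \<subseteq> {s. g s = 0}"
  shows "closure (span \<Lambda>) \<noteq> UNIV"
proof -
  have "subspace {s. g s = 0}" using g by (simp add: bounded_linear.linear linear_subspace_kernel)
  then have "span \<Lambda> \<subseteq> {s. g s = 0}" by (rule span_minimal[OF \<Lambda>])
  moreover have "closed {s. g s = 0}"
    using g by (intro closed_Collect_eq linear_continuous_on continuous_on_const)
  ultimately have "closure (span \<Lambda>) \<subseteq> {s. g s = 0}" by (rule closure_minimal)
  then show ?thesis using v by auto
qed

lemma overcomplete_kernel_card_ordLess:
  fixes g :: "'a::real_normed_vector \<Rightarrow> 'b::real_normed_vector"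
  assumes S: "overcomplete S" and g: "bounded_linear g" and v: "g v \<noteq> 0"
  shows "|{s\<in>S. g s = 0}| <o |S|"
proof -
  have "\<not> |{s\<in>S. g s = 0}| =o |S|"
  proof
    assume "|{s\<in>S. g s = 0}| =o |S|"
    then have "closure (span {s\<in>S. g s = 0}) = UNIV"
      using S unfolding overcomplete_def by simp
    moreover have "closure (span {s\<in>S. g s = 0}) \<noteq> UNIV"
      by (rule closure_span_ne_UNIV_if_subset_kernel[OF g v]) blast
    ultimately show False by contradiction
  qed
  moreover have "|{s\<in>S. g s = 0}| \<le>o |S|" by (rule card_of_mono1) blast
  ultimately show ?thesis by (simp add: ordLeq_iff_ordLess_or_ordIso)
qed

section \<open>Rational linear combinations\<close>

primrec rat_combinations :: "'a::real_vector set \<Rightarrow> nat \<Rightarrow> 'a set" where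
  "rat_combinations V 0 = {0}"
| "rat_combinations V (Suc n) =
    (\<lambda>(p, v, q). p + of_rat q *\<^sub>R v) ` (rat_combinations V n \<times> V \<times> (UNIV :: rat set))"

lemma rat_combinations_add:
  "a \<in> rat_combinations V n \<Longrightarrow> b \<in> rat_combinations V m \<Longrightarrow> a + b \<in> rat_combinations V (n + m)"
proof (induction m arbitrary: b)
  case (Suc m)
  then obtain p v q where b: "b = p + of_rat q *\<^sub>R v" "p \<in> rat_combinations V m" "v \<in> V"
    by auto
  then have "(a + p) + of_rat q *\<^sub>R v \<in> rat_combinations V (Suc (n + m))"
    using Suc.IH[OF Suc.prems(1) b(2)] b(3) by (auto intro!: image_eqI[where x = "(a + p, v, q)"])
  then show ?case using b(1) by (simp add: add.assoc)
qed simp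

lemma rat_combinations_scaleR:
  "a \<in> rat_combinations V n \<Longrightarrow> of_rat r *\<^sub>R a \<in> rat_combinations V n"
proof (induction n arbitrary: a)
  case (Suc n)
  then obtain p v q where a: "a = p + of_rat q *\<^sub>R v" "p \<in> rat_combinations V n" "v \<in> V"
    by auto
  then have "of_rat r *\<^sub>R p + of_rat (r * q) *\<^sub>R v \<in> rat_combinations V (Suc n)"
    using Suc.IH[OF a(2)] a(3) by (auto intro!: image_eqI[where x = "(of_rat r *\<^sub>R p, v, r * q)"])
  then show ?case using a(1) by (simp add: scaleR_add_right of_rat_mult)
qed simp

lemma card_of_rat_combinations:
  assumes "|V| \<le>o r" "infinite (Field r)" "Card_order r"
  shows "|rat_combinations V n| \<le>o r"
proof (induction n)
  case 0
  show ?case using assms(2,3) by (simp add: countable_card_of_ordLeq_infinite_Field)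
next
  case (Suc n)
  have "|UNIV :: rat set| \<le>o r"
    using assms(2,3) by (simp add: countable_card_of_ordLeq_infinite_Field)
  then have "|V \<times> (UNIV :: rat set)| \<le>o r"
    by (rule card_of_Times_ordLeq_infinite_Field[OF assms(2,1) _ assms(3)])
  then have "|rat_combinations V n \<times> V \<times> (UNIV :: rat set)| \<le>o r"
    by (rule card_of_Times_ordLeq_infinite_Field[OF assms(2) Suc.IH _ assms(3)])
  then show ?case by (simp only: rat_combinations.simps) (rule ordLeq_transitive[OF card_of_image])
qed

lemma closure_span_subset_closure_rat_combinations:
  fixes V :: "'a::real_normed_vector set"
  shows "closure (span V) \<subseteq> closure (\<Union>n. rat_combinations V n)"
proof -
  define D where "D = (\<Union>n. rat_combinations V n)"
  have add: "a + b \<in> D" if "a \<in> D" "b \<in> D" for a b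
  proof -
    obtain n m where "a \<in> rat_combinations V n" "b \<in> rat_combinations V m"
      using \<open>a \<in> D\<close> \<open>b \<in> D\<close> unfolding D_def by blast
    then have "a + b \<in> rat_combinations V (n + m)" by (rule rat_combinations_add)
    then show ?thesis unfolding D_def by blast
  qed
  have scale: "c *\<^sub>R a \<in> D" if "c \<in> \<rat>" "a \<in> D" for c a
  proof -
    obtain r where r: "c = of_rat r" using \<open>c \<in> \<rat>\<close> by (rule Rats_cases)
    obtain n where "a \<in> rat_combinations V n" using \<open>a \<in> D\<close> unfolding D_def by blast
    then have "of_rat r *\<^sub>R a \<in> rat_combinations V n" by (rule rat_combinations_scaleR)
    then show ?thesis unfolding D_def r by blast
  qed
  have V: "V \<subseteq> D"
  proof
    fix v assume "v \<in> V"
    then have "v \<in> rat_combinations V (Suc 0)"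
      by (auto intro!: image_eqI[where x = "(0, v, 1)"])
    then show "v \<in> D" unfolding D_def by blast
  qed
  have "subspace (closure D)"
    unfolding subspace_def
  proof (intro conjI ballI allI)
    have "0 \<in> rat_combinations V 0" by simp
    then show "0 \<in> closure D" unfolding D_def by (meson UN_I UNIV_I closure_subset subsetD)
    have "(\<lambda>p. fst p + snd p) ` closure (D \<times> D) \<subseteq> closure D"
    proof (rule image_closure_subset)
      show "continuous_on (closure (D \<times> D)) (\<lambda>p. fst p + snd p)"
        by (intro continuous_intros)
      show "(\<lambda>p. fst p + snd p) ` (D \<times> D) \<subseteq> closure D"
        using add closure_subset by fastforce
    qed simp
    then show "a + b \<in> closure D" if "a \<in> closure D" "b \<in> closure D" for a b
      using that by (force simp: closure_Times)
    have "(\<lambda>p. fst p *\<^sub>R snd p) ` closure (\<rat> \<times> D) \<subseteq> closure D"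
    proof (rule image_closure_subset)
      show "continuous_on (closure (\<rat> \<times> D)) (\<lambda>p. fst p *\<^sub>R snd p)"
        by (intro continuous_intros)
      show "(\<lambda>p. fst p *\<^sub>R snd p) ` (\<rat> \<times> D) \<subseteq> closure D"
        using scale closure_subset by fastforce
    qed simp
    then show "c *\<^sub>R a \<in> closure D" if "a \<in> closure D" for c a
      using that by (force simp: closure_Times Rats_closure_real)
  qed
  moreover have "V \<subseteq> closure D" using V closure_subset by blast
  ultimately have "span V \<subseteq> closure D" by (rule span_minimal[rotated])
  then show ?thesis unfolding D_def by (rule closure_minimal) simp
qed

lemma exists_dense_subset_card_ordLeq:
  fixes V :: "'a::real_normed_vector set"
  assumes "closure (span V) = UNIV" "|V| \<le>o r" "infinite (Field r)" "Card_order r"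
  shows "\<exists>D::'a set. closure D = UNIV \<and> |D| \<le>o r"
proof (intro exI conjI)
  show "closure (\<Union>n. rat_combinations V n) = UNIV"
    using assms(1) closure_span_subset_closure_rat_combinations by blast
  have "|UNIV :: nat set| \<le>o r"
    using assms(3,4) by (simp add: countable_card_of_ordLeq_infinite_Field)
  then show "|\<Union>n. rat_combinations V n| \<le>o r"
    by (rule card_of_UNION_ordLeq_infinite_Field[OF assms(3,4)])
      (rule card_of_rat_combinations[OF assms(2-4)])
qed

section \<open>Density character at least omega_2\<close>

lemma dense_card_gt_cardSuc_natLeq:
  assumes "dens_ge_omega2 TYPE('a::real_normed_vector)" and "closure (D::'a set) = UNIV"
  shows "cardSuc natLeq <o |D|"
proof -
  have "cardSuc natLeq <o aleph2"
    unfolding aleph2_def by (rule cardSuc_greater[OF Card_order_cardSuc_natLeq])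
  also have "aleph2 \<le>o |D|" using assms unfolding dens_ge_omega2_def by blast
  finally show ?thesis .
qed

lemma linearly_dense_card_gt_cardSuc_natLeq:
  assumes "dens_ge_omega2 TYPE('a::real_normed_vector)" and "closure (span (V::'a set)) = UNIV"
  shows "cardSuc natLeq <o |V|"
proof -
  have "\<not> |V| \<le>o cardSuc natLeq"
  proof
    assume "|V| \<le>o cardSuc natLeq"
    then obtain D :: "'a set" where "closure D = UNIV" "|D| \<le>o cardSuc natLeq"
      using exists_dense_subset_card_ordLeq[OF assms(2)]
        infinite_Field_cardSuc_natLeq Card_order_cardSuc_natLeq by blast
    then show False
      using dense_card_gt_cardSuc_natLeq[OF assms(1)] not_ordLess_ordLeq by blast
  qed
  then show ?thesis
    using Card_order_cardSuc_natLeq card_order_on_well_order_on card_of_Well_order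
      not_ordLeq_iff_ordLess by blast
qed

lemma card_eq_dens_gt_cardSuc_natLeq:
  assumes "dens_ge_omega2 TYPE('a::real_normed_vector)" and "card_eq_dens (S::'a set)"
  shows "cardSuc natLeq <o |S|"
proof -
  obtain D :: "'a set" where "closure D = UNIV" "|D| =o |S|"
    using assms(2) unfolding card_eq_dens_def by blast
  then show ?thesis
    using dense_card_gt_cardSuc_natLeq[OF assms(1)] ordLess_ordIso_trans by blast
qed

theorem theorem3p6:
  fixes \<Gamma> :: "'i set" and x :: "'i \<Rightarrow> 'a::banach" and f :: "'i \<Rightarrow> 'a \<Rightarrow> real"
  assumes "dens_ge_omega2 TYPE('a)"
    and "fundamental_biorthogonal_system \<Gamma> x f"
  shows "\<not> (\<exists>S::'a set. overcomplete S)"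
proof
  assume "\<exists>S::'a set. overcomplete S"
  then obtain S :: "'a set" where S: "overcomplete S" ..
  have bio: "biorthogonal_system \<Gamma> x f" and dense: "closure (span (x ` \<Gamma>)) = UNIV"
    using assms(2) unfolding fundamental_biorthogonal_system_def by auto
  have S_card: "cardSuc natLeq <o |S|"
    using S card_eq_dens_gt_cardSuc_natLeq[OF assms(1)] unfolding overcomplete_def by simp
  have \<Gamma>_card: "cardSuc natLeq <o |\<Gamma>|"
    using linearly_dense_card_gt_cardSuc_natLeq[OF assms(1) dense] card_of_image
    by (rule ordLess_ordLeq_trans)
  have kernel: "|{s\<in>S. f \<alpha> s = 0}| <o |S|" if "\<alpha> \<in> \<Gamma>" for \<alpha>
  proof (rule overcomplete_kernel_card_ordLess[OF S])
    show "bounded_linear (f \<alpha>)" "f \<alpha> (x \<alpha>) \<noteq> 0"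
      using bio that unfolding biorthogonal_system_def by simp_all
  qed
  obtain J where J: "J \<subseteq> \<Gamma>" "uncountable J"
    and small: "|\<Union>\<alpha>\<in>J. {s\<in>S. f \<alpha> s = 0}| <o |S|"
    using exists_uncountable_subfamily_small_Union[where B = "\<lambda>\<alpha>. {s\<in>S. f \<alpha> s = 0}",
        OF \<Gamma>_card S_card kernel]
    by blast
  have "\<not> S \<subseteq> (\<Union>\<alpha>\<in>J. {s\<in>S. f \<alpha> s = 0})"
    using not_ordLess_ordLeq[OF small] by (auto dest: card_of_mono1)
  then obtain s where "s \<in> S" "s \<notin> (\<Union>\<alpha>\<in>J. {s\<in>S. f \<alpha> s = 0})" by blast
  then have "J \<subseteq> {\<alpha>\<in>\<Gamma>. f \<alpha> s \<noteq> 0}" using J(1) by blast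
  then have "countable J"
    by (rule countable_subset[OF _ fundamental_biorthogonal_system_countable_support[OF assms(2)]])
  then show False using J(2) by contradiction
qed

end
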